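(* Let $\ell\ge 2$, $A\ge 2$ and $H\ge \ell+1$ be integers. There exists an episodic tabular MDP with $A$ actions, horizon $H$, at most $S\le 1+A^{\ell}$ states and deterministic transitions, together with a fixed initial state $s_1$, such that every fixed batching policy (for any batching horizon $B\in\{1,\dots,\ell\}$) collects an expected cumulative reward of at most $A^{-\ell/2+1}$ from $s_1$, whereas the optimal value achievable by $\ell$-step lookahead policies from $s_1$ is larger than $1/2$.
   Context: An episodic tabular MDP has finite state space $\mathcal{S}$ ($|\mathcal{S}|=S$), finite action space $\mathcal{A}$ ($|\mathcal{A}|=A$), horizon $H$, reward distributions $\mathcal{R}_h(s,a)$ supported in $[0,1]$ and transition kernels $P_h(\cdot\mid s,a)$; rewards and transitions are independent across time steps but may be arbitrarily correlated across states and actions within a step. The value of a policy is its expected cumulative reward $\mathbb{E}[\sum_{t=1}^H R_t]$. The $\ell$-step lookahead information at step $h$ in state $s$ consists of the realized rewards and next states along all trajectories from $s$ over steps $h,\dots,h+\ell_h-1$ under every deterministic Markov policy (equivalently, the realized reward and next state of every state-action pair reachable from $s$ at each of these steps), where $\ell_h=\min\{\ell,H-h+1\}$; realizations are consistent across trajectories. An $\ell$-step lookahead policy chooses $a_h$ as a function of $s_h$ and the $\ell$-step lookahead information observed at step $h$ (and the history). A fixed batching policy with batching horizon $B\le \ell$ only observes lookahead information at the predefined steps $nB+1$ ($n=0,1,\dots$): at step $nB+1$ it observes the $B$-step lookahead information from $s_{nB+1}$, and for all steps $h\in\{nB+1,\dots,(n+1)B\}$ its action depends only on $s_h$ and this information.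 *)

theory Defs
  imports "HOL-Probability.Probability"
begin

(* Conventions: states are 0..<S, actions 0..<A, time steps are 0-based: 0..<H
   (step h here = step h+1 of the paper).
   Deterministic transitions: P h s a = next state.
   Reward randomness: a realization w :: nat => nat => nat => real, w h s a = reward of (s,a) at step h.
   The reward vector of step h is drawn from the joint distribution D h (arbitrary correlation
   across state-action pairs); different steps are independent (product pmf). *)

type_synonym rew_real = "nat \<Rightarrow> nat \<Rightarrow> nat \<Rightarrow> real"
type_synonym info = "nat \<Rightarrow> nat \<Rightarrow> nat \<Rightarrow> real option"

definition det_mdp ::
  "nat \<Rightarrow> nat \<Rightarrow> nat \<Rightarrow> (nat \<Rightarrow> nat \<Rightarrow> nat \<Rightarrow> nat) \<Rightarrow> (nat \<Rightarrow> (nat \<Rightarrow> nat \<Rightarrow> real) pmf) \<Rightarrow> bool"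
  where "det_mdp S A H P D \<longleftrightarrow>
     (\<forall>h<H. \<forall>s<S. \<forall>a<A. P h s a < S) \<and>
     (\<forall>h<H. \<forall>r\<in>set_pmf (D h). \<forall>s<S. \<forall>a<A. 0 \<le> r s a \<and> r s a \<le> 1)"

definition rew_pmf :: "nat \<Rightarrow> (nat \<Rightarrow> (nat \<Rightarrow> nat \<Rightarrow> real) pmf) \<Rightarrow> rew_real pmf"
  where "rew_pmf H D = Pi_pmf {..<H} (\<lambda>_ _. 0) D"

fun reach :: "nat \<Rightarrow> (nat \<Rightarrow> nat \<Rightarrow> nat \<Rightarrow> nat) \<Rightarrow> nat \<Rightarrow> nat \<Rightarrow> nat \<Rightarrow> nat set" where
  "reach A P h s 0 = {s}"
| "reach A P h s (Suc k) = {P (h + k) s' a | s' a. s' \<in> reach A P h s k \<and> a < A}"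

(* L-step lookahead information observed at step h in state s (window truncated at horizon):
   realized rewards of all pairs (s',a) reachable from s at steps h..min(h+L,H)-1.
   Next states are deterministic and known, hence not recorded separately. *)
definition lookahead_info :: "nat \<Rightarrow> nat \<Rightarrow> (nat \<Rightarrow> nat \<Rightarrow> nat \<Rightarrow> nat) \<Rightarrow> nat \<Rightarrow> nat \<Rightarrow> nat \<Rightarrow> rew_real \<Rightarrow> info"
  where "lookahead_info A H P h s L w = (\<lambda>t s' a.
     if h \<le> t \<and> t < min (h + L) H \<and> s' \<in> reach A P h s (t - h) \<and> a < A
     then Some (w t s' a) else None)"

(* trajectory of states at steps 0..h under a decision rule d (d h xs = action at step h
   given the list xs of states at steps 0..h) *)
primrec traj :: "nat \<Rightarrow> (nat \<Rightarrow> nat list \<Rightarrow> nat) \<Rightarrow> (nat \<Rightarrow> nat \<Rightarrow> nat \<Rightarrow> nat) \<Rightarrow> nat \<Rightarrow> nat list" where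
  "traj s1 d P 0 = [s1]"
| "traj s1 d P (Suc h) = traj s1 d P h @ [P h (last (traj s1 d P h)) (d h (traj s1 d P h))]"

definition cum_reward :: "nat \<Rightarrow> (nat \<Rightarrow> nat \<Rightarrow> nat \<Rightarrow> nat) \<Rightarrow> nat \<Rightarrow> (nat \<Rightarrow> nat list \<Rightarrow> nat) \<Rightarrow> rew_real \<Rightarrow> real"
  where "cum_reward H P s1 d w = (\<Sum>h<H. w h (traj s1 d P h ! h) (d h (traj s1 d P h)))"

(* fixed batching policy pol h s I with batching horizon B: at step h, I is the B-step lookahead
   information observed at the last batch start (h div B) * B from the state at that step *)
definition batch_rule :: "nat \<Rightarrow> nat \<Rightarrow> (nat \<Rightarrow> nat \<Rightarrow> nat \<Rightarrow> nat) \<Rightarrow> nat \<Rightarrow> (nat \<Rightarrow> nat \<Rightarrow> info \<Rightarrow> nat) \<Rightarrow> rew_real \<Rightarrow> nat \<Rightarrow> nat list \<Rightarrow> nat"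
  where "batch_rule A H P B pol w h xs =
     pol h (xs ! h) (lookahead_info A H P ((h div B) * B) (xs ! ((h div B) * B)) B w)"

definition batch_value :: "nat \<Rightarrow> nat \<Rightarrow> (nat \<Rightarrow> nat \<Rightarrow> nat \<Rightarrow> nat) \<Rightarrow> (nat \<Rightarrow> (nat \<Rightarrow> nat \<Rightarrow> real) pmf) \<Rightarrow> nat \<Rightarrow> nat \<Rightarrow> (nat \<Rightarrow> nat \<Rightarrow> info \<Rightarrow> nat) \<Rightarrow> real"
  where "batch_value A H P D s1 B pol =
     measure_pmf.expectation (rew_pmf H D) (\<lambda>w. cum_reward H P s1 (batch_rule A H P B pol w) w)"

(* l-step lookahead policy pol h s Is: Is = list of lookahead informations observed at steps 0..h
   (the history; past states, actions and realized rewards are determined by it) *)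
definition look_rule :: "nat \<Rightarrow> nat \<Rightarrow> (nat \<Rightarrow> nat \<Rightarrow> nat \<Rightarrow> nat) \<Rightarrow> nat \<Rightarrow> (nat \<Rightarrow> nat \<Rightarrow> info list \<Rightarrow> nat) \<Rightarrow> rew_real \<Rightarrow> nat \<Rightarrow> nat list \<Rightarrow> nat"
  where "look_rule A H P l pol w h xs =
     pol h (xs ! h) (map (\<lambda>t. lookahead_info A H P t (xs ! t) l w) [0..<Suc h])"

definition look_value :: "nat \<Rightarrow> nat \<Rightarrow> (nat \<Rightarrow> nat \<Rightarrow> nat \<Rightarrow> nat) \<Rightarrow> (nat \<Rightarrow> (nat \<Rightarrow> nat \<Rightarrow> real) pmf) \<Rightarrow> nat \<Rightarrow> nat \<Rightarrow> (nat \<Rightarrow> nat \<Rightarrow> info list \<Rightarrow> nat) \<Rightarrow> real"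
  where "look_value A H P D s1 l pol =
     measure_pmf.expectation (rew_pmf H D) (\<lambda>w. cum_reward H P s1 (look_rule A H P l pol w) w)"

end

theory Submission
  imports Defs
begin

(* Arrange A^(l-1) states as the leaves of a complete A-ary tree that is descended during
   steps 1..l-1, and let exactly one uniformly random leaf pay reward 1 at step l.
   An l-step lookahead policy sees at step 1 which leaf pays and walks to it, collecting 1.
   A batching policy with horizon B learns nothing about the rewards before its last batch
   start (l div B) * B, so its state there is fixed; from it only A^(l mod B) <= A^(l/2)
   leaves are reachable, and it hits the paying leaf with probability at most
   A^(l/2) / A^(l-1). *)

lemma length_traj [simp]: "length (traj s1 d P h) = Suc h"
  by (induction h) auto

lemma traj_Suc_nth: "traj s1 d P (Suc h) ! Suc h = P h (traj s1 d P h ! h) (d h (traj s1 d P h))"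
proof -
  have "traj s1 d P h \<noteq> []"
    using length_traj[of s1 d P h] by (metis list.size(3) nat.distinct(1))
  then show ?thesis
    by (simp add: nth_append last_conv_nth)
qed

lemma nth_traj: "j \<le> h \<Longrightarrow> traj s1 d P h ! j = traj s1 d P j ! j"
  by (induction h) (auto simp: nth_append le_Suc_eq)

lemma traj_cong: "(\<And>j xs. j < h \<Longrightarrow> d j xs = d' j xs) \<Longrightarrow> traj s1 d P h = traj s1 d' P h"
  by (induction h) auto

lemma traj_nth_in_reach:
  assumes "\<And>i xs. d i xs < A"
  shows "traj s1 d P (h + j) ! (h + j) \<in> reach A P h (traj s1 d P h ! h) j"
proof (induction j)
  case (Suc j)
  then show ?case
    using traj_Suc_nth[of s1 d P "h + j"] assms by auto
qed simp

lemma reach_Suc_eq_image: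
  "reach A P h s (Suc k) = (\<lambda>(s', a). P (h + k) s' a) ` (reach A P h s k \<times> {..<A})"
  by auto

lemma finite_reach: "finite (reach A P h s k)"
  by (induction k) (simp_all add: reach_Suc_eq_image del: reach.simps(2))

lemma card_reach_le: "card (reach A P h s k) \<le> A ^ k"
proof (induction k)
  case (Suc k)
  have "card (reach A P h s (Suc k)) \<le> card (reach A P h s k \<times> {..<A})"
    unfolding reach_Suc_eq_image by (rule card_image_le) (simp add: finite_reach)
  also have "\<dots> \<le> A ^ Suc k"
    using Suc by (simp add: card_cartesian_product)
  finally show ?case .
qed simp

lemma lookahead_info_cong:
  "(\<And>t. t < h + L \<Longrightarrow> w t = w' t) \<Longrightarrow> lookahead_info A H P h s L w = lookahead_info A H P h s L w'"
  unfolding lookahead_info_def by (intro ext) (auto cong: if_cong)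

lemma batch_rule_cong_before:
  assumes "B dvd ts" "j < ts" "\<And>t. t < ts \<Longrightarrow> w t = w' t"
  shows "batch_rule A H P B pol w j xs = batch_rule A H P B pol w' j xs"
proof -
  from assms(1) obtain n where ts: "ts = n * B"
    by (metis dvdE mult.commute)
  with assms(2) have "j div B < n"
    by (simp add: less_mult_imp_div_less)
  then have "Suc (j div B) * B \<le> n * B"
    by (intro mult_le_mono1) simp
  then have window: "j div B * B + B \<le> ts"
    unfolding ts by simp
  have "lookahead_info A H P (j div B * B) s B w = lookahead_info A H P (j div B * B) s B w'" for s
  proof (rule lookahead_info_cong)
    fix t
    assume "t < j div B * B + B"
    with window show "w t = w' t"
      by (intro assms(3)) simp
  qed
  then show ?thesis
    unfolding batch_rule_def by simp
qed

lemma batch_traj_in_reach: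
  assumes "B dvd ts" "ts \<le> l" "\<And>h s I. pol h s I < A" "\<And>t. t < ts \<Longrightarrow> w t = w' t"
  shows "traj s1 (batch_rule A H P B pol w) P l ! l
           \<in> reach A P ts (traj s1 (batch_rule A H P B pol w') P ts ! ts) (l - ts)"
proof -
  have "traj s1 (batch_rule A H P B pol w) P ts = traj s1 (batch_rule A H P B pol w') P ts"
    using assms(1,4) by (intro traj_cong batch_rule_cong_before)
  moreover have "batch_rule A H P B pol w i xs < A" for i xs
    using assms(3) by (simp add: batch_rule_def)
  ultimately show ?thesis
    using traj_nth_in_reach[of "batch_rule A H P B pol w" A s1 P ts "l - ts"] assms(2) by simp
qed

lemma rew_pmf_single_step:
  assumes "l < H" "\<And>h. h \<noteq> l \<Longrightarrow> D h = return_pmf (\<lambda>_ _. 0)"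
  shows "rew_pmf H D = map_pmf (\<lambda>r h. if h = l then r else (\<lambda>_ _. 0)) (D l)"
proof -
  have "rew_pmf H D = Pi_pmf {l} (\<lambda>_ _. 0) D"
    unfolding rew_pmf_def by (rule Pi_pmf_subset') (use assms in auto)
  then show ?thesis by (simp add: Pi_pmf_singleton)
qed

lemma double_mod_le:
  assumes "0 < B" "B \<le> l"
  shows "2 * (l mod B) \<le> (l :: nat)"
proof -
  have "l mod B \<le> l - B"
    using le_mod_geq[OF assms(2)] by simp
  moreover have "l mod B < B"
    using assms(1) by simp
  ultimately show ?thesis
    by linarith
qed

lemma div_power_Suc_mult_add_mod:
  "(k :: nat) div A ^ Suc j * A + k div A ^ j mod A = k div A ^ j"
  unfolding power_Suc2 div_mult2_eq by simp

locale needle_tree =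
  fixes A l H :: nat
  assumes A_pos: "0 < A" and l_pos: "0 < l" and l_less_H: "l < H"
begin

definition leaves :: nat where
  "leaves = A ^ (l - 1)"

text \<open>State 0 is the root; taking action a in state s at a step 1 \<le> h < l moves to the child
  s * A + a, so the leaf reached at step l spells out the base-A digits of the actions.\<close>

definition tree_step :: "nat \<Rightarrow> nat \<Rightarrow> nat \<Rightarrow> nat" where
  "tree_step h s a = (if 1 \<le> h \<and> h < l \<and> s * A + a < leaves then s * A + a else 0)"

definition needle :: "nat \<Rightarrow> rew_real" where
  "needle k = (\<lambda>h s a. if h = l \<and> s = k then 1 else 0)"

definition needle_dist :: "nat \<Rightarrow> (nat \<Rightarrow> nat \<Rightarrow> real) pmf" where
  "needle_dist h = (if h = l then map_pmf (\<lambda>k. needle k l) (pmf_of_set {..<leaves})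
                    else return_pmf (\<lambda>_ _. 0))"

definition digit :: "nat \<Rightarrow> nat \<Rightarrow> nat" where
  "digit k h = k div A ^ (l - Suc h) mod A"

text \<open>\<open>Is ! 1\<close> is the information observed at step 1 in the root; its window reaches step l,
  where the paying leaf is the unique k with reward 1.\<close>

definition follow_needle :: "nat \<Rightarrow> nat \<Rightarrow> info list \<Rightarrow> nat" where
  "follow_needle h s Is = digit (SOME k. (Is ! 1) l k 0 = Some 1) h"

lemma leaves_pos: "0 < leaves"
  using A_pos by (simp add: leaves_def)

lemma det_mdp_needle_tree: "det_mdp leaves A H tree_step needle_dist"
  unfolding det_mdp_def using leaves_pos
  by (auto simp: tree_step_def needle_dist_def needle_def)

lemma expectation_needle:
  "measure_pmf.expectation (rew_pmf H needle_dist) f = (\<Sum>k<leaves. f (needle k)) / real leaves"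
proof -
  have "rew_pmf H needle_dist = map_pmf needle (pmf_of_set {..<leaves})"
    using l_less_H
    by (subst rew_pmf_single_step) (auto simp: needle_dist_def map_pmf_comp needle_def
        intro!: map_pmf_cong)
  moreover have "{..<leaves} \<noteq> {}"
    using leaves_pos by auto
  ultimately show ?thesis
    by (simp add: integral_pmf_of_set)
qed

lemma cum_reward_needle:
  "cum_reward H P s1 d (needle k) = (if traj s1 d P l ! l = k then 1 else 0)"
proof -
  have "cum_reward H P s1 d (needle k) = (\<Sum>h<H. if h = l then (if traj s1 d P l ! l = k then 1 else 0) else 0)"
    unfolding cum_reward_def needle_def by (intro sum.cong) auto
  then show ?thesis
    using l_less_H by simp
qed

lemma card_batch_hits_le:
  assumes "0 < B" "\<And>h s I. pol h s I < A"
  shows "card ({..<leaves} \<inter> {k. traj s1 (batch_rule A H tree_step B pol (needle k)) tree_step l ! l = k})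
           \<le> A ^ (l mod B)"
    (is "card ?hits \<le> _")
proof -
  define ts where "ts = l div B * B"
  let ?rule = "\<lambda>k. batch_rule A H tree_step B pol (needle k)"
  define R where "R = reach A tree_step ts (traj s1 (?rule 0) tree_step ts ! ts) (l mod B)"
  have ts_le: "ts \<le> l" and l_ts: "l - ts = l mod B"
    by (simp_all add: ts_def minus_div_mult_eq_mod)
  have in_R: "traj s1 (?rule k) tree_step l ! l \<in> R" for k
    unfolding R_def l_ts[symmetric]
  proof (rule batch_traj_in_reach)
    show "needle k t = needle 0 t" if "t < ts" for t
      using that ts_le by (simp add: needle_def)
  qed (use assms(2) ts_le in \<open>simp_all add: ts_def\<close>)
  have "?hits \<subseteq> R"
  proof
    fix k
    assume "k \<in> ?hits"
    then have "traj s1 (?rule k) tree_step l ! l = k"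
      by simp
    with in_R[of k] show "k \<in> R"
      by simp
  qed
  then have "card ?hits \<le> card R"
    unfolding R_def by (rule card_mono[OF finite_reach])
  also have "\<dots> \<le> A ^ (l mod B)"
    unfolding R_def by (rule card_reach_le)
  finally show ?thesis .
qed

lemma batch_value_le:
  assumes "1 \<le> B" "B \<le> l" "\<And>h s I. pol h s I < A"
  shows "batch_value A H tree_step needle_dist s1 B pol \<le> real A powr (1 - real l / 2)"
proof -
  let ?rule = "\<lambda>k. batch_rule A H tree_step B pol (needle k)"
  have "batch_value A H tree_step needle_dist s1 B pol
          = (\<Sum>k<leaves. cum_reward H tree_step s1 (?rule k) (needle k)) / real leaves"
    unfolding batch_value_def expectation_needle ..
  also have "\<dots> = real (card ({..<leaves} \<inter> {k. traj s1 (?rule k) tree_step l ! l = k})) / real leaves"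
    by (simp add: cum_reward_needle sum.If_cases)
  also have "\<dots> \<le> real A ^ (l mod B) / real leaves"
    using card_batch_hits_le[of B pol s1] assms(1,3)
    by (intro divide_right_mono) (simp_all flip: of_nat_power)
  also have "\<dots> = real A powr (real (l mod B) - real (l - 1))"
    using A_pos by (simp add: leaves_def powr_diff powr_realpow)
  also have "\<dots> \<le> real A powr (1 - real l / 2)"
    using A_pos l_pos double_mod_le[OF _ assms(2)] assms(1) by (intro powr_mono) auto
  finally show ?thesis .
qed

lemma tree_step_0 [simp]: "tree_step 0 s a = 0"
  by (simp add: tree_step_def)

lemma traj_at_root: "traj s1 d tree_step 1 ! 1 = 0"
  by (simp add: traj_Suc_nth[of s1 d tree_step 0])

lemma tree_step_digit:
  assumes "k < leaves" "1 \<le> h" "h < l"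
  shows "tree_step h (k div A ^ (l - h)) (digit k h) = k div A ^ (l - Suc h)"
proof -
  have "l - h = Suc (l - Suc h)"
    using assms(3) by simp
  then have "k div A ^ (l - h) * A + digit k h = k div A ^ (l - Suc h)"
    unfolding digit_def by (simp only: div_power_Suc_mult_add_mod)
  moreover have "k div A ^ (l - Suc h) < leaves"
    using assms(1) div_le_dividend le_less_trans by blast
  ultimately show ?thesis
    using assms by (simp add: tree_step_def)
qed

lemma traj_reaches_leaf:
  assumes "k < leaves" "\<And>h. 1 \<le> h \<Longrightarrow> h < l \<Longrightarrow> d h (traj s1 d tree_step h) = digit k h"
  shows "traj s1 d tree_step l ! l = k"
proof -
  have "traj s1 d tree_step h ! h = k div A ^ (l - h)" if "1 \<le> h" "h \<le> l" for h
    using that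
  proof (induction h rule: dec_induct)
    case base
    then show ?case
      using assms(1) traj_at_root by (simp add: leaves_def)
  next
    case (step h)
    then show ?case
      using traj_Suc_nth[of s1 d tree_step h] tree_step_digit[OF assms(1)] assms(2) by simp
  qed
  then show ?thesis
    using l_pos by simp
qed

lemma leaf_in_reach:
  assumes "k < leaves"
  shows "k \<in> reach A tree_step 1 0 (l - 1)"
proof -
  let ?d = "\<lambda>h _. digit k h"
  have "traj 0 ?d tree_step (1 + (l - 1)) ! (1 + (l - 1))
          \<in> reach A tree_step 1 (traj 0 ?d tree_step 1 ! 1) (l - 1)"
    by (rule traj_nth_in_reach) (simp add: digit_def A_pos)
  moreover have "traj 0 ?d tree_step l ! l = k"
    by (rule traj_reaches_leaf[OF assms]) simp
  ultimately show ?thesis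
    using l_pos traj_at_root by simp
qed

lemma follow_needle_digits:
  assumes "k < leaves" "1 \<le> h"
    and "xs = traj 0 (look_rule A H tree_step l follow_needle (needle k)) tree_step h"
  shows "look_rule A H tree_step l follow_needle (needle k) h xs = digit k h"
proof -
  have "xs ! 1 = 0"
    using assms(3) nth_traj[OF assms(2)] traj_at_root by simp
  moreover have "(SOME k'. lookahead_info A H tree_step 1 0 l (needle k) l k' 0 = Some 1) = k"
    using leaf_in_reach[OF assms(1)] l_pos l_less_H A_pos
    by (intro some_equality) (auto simp: lookahead_info_def needle_def split: if_splits)
  ultimately show ?thesis
    using assms(2) by (simp add: look_rule_def follow_needle_def del: upt_Suc)
qed

lemma look_value_follow_needle: "look_value A H tree_step needle_dist 0 l follow_needle = 1"
proof -
  have "cum_reward H tree_step 0 (look_rule A H tree_step l follow_needle (needle k)) (needle k) = 1"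
    if "k < leaves" for k
    using traj_reaches_leaf[OF that] follow_needle_digits[OF that] by (simp add: cum_reward_needle)
  then show ?thesis
    unfolding look_value_def expectation_needle using leaves_pos by simp
qed

end

theorem claim1:
  fixes l A H :: nat
  assumes "l \<ge> 2" and "A \<ge> 2" and "H \<ge> l + 1"
  shows "\<exists>S P D s1. S \<le> 1 + A ^ l \<and> det_mdp S A H P D \<and> s1 < S \<and>
     (\<forall>B pol. 1 \<le> B \<and> B \<le> l \<and> (\<forall>h s I. pol h s I < A) \<longrightarrow>
        batch_value A H P D s1 B pol \<le> real A powr (1 - real l / 2)) \<and>
     (\<exists>pol. (\<forall>h s I. pol h s I < A) \<and> look_value A H P D s1 l pol > 1 / 2)"
proof -
  interpret needle_tree A l H
    using assms by unfold_locales auto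
  have "A ^ (l - 1) \<le> A ^ l"
    using assms by (intro power_increasing) auto
  then have "leaves \<le> 1 + A ^ l"
    by (simp add: leaves_def)
  moreover have "\<exists>pol. (\<forall>h s I. pol h s I < A) \<and> look_value A H tree_step needle_dist 0 l pol > 1 / 2"
    using A_pos look_value_follow_needle by (intro exI[of _ follow_needle]) (simp add: follow_needle_def digit_def)
  ultimately show ?thesis
    using det_mdp_needle_tree batch_value_le leaves_pos by blast
qed

end
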